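(* Let $n>d+1$ and let $\mathcal{F}_1,\dots,\mathcal{F}_n$ be collections of axis-parallel boxes in $\mathbb{R}^d$ such that for all $i\neq j$, $B\in\mathcal{F}_i$ and $B'\in\mathcal{F}_j$ we have $B\cap B'\neq\emptyset$. Then there exist $i\in[n]$ and, for each $j\in[n]\setminus\{i\}$, a box $B_j\in\mathcal{F}_j$ such that $\mathcal{F}_i\cup\{B_j: j\in[n],\,j\neq i\}$ is $2$-pierceable.
   Context: An axis-parallel box in $\mathbb{R}^d$ is a set $[\alpha_1,\beta_1]\times\dots\times[\alpha_d,\beta_d]$ with real $\alpha_j\le\beta_j$. A family is $2$-pierceable if some set of at most $2$ points of $\mathbb{R}^d$ meets every member of it. *)

theory Defs
  imports "HOL-Analysis.Analysis"
begin

definition is_box :: "(real^'d) set \<Rightarrow> bool" where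
  "is_box B \<longleftrightarrow> (\<exists>a b :: real^'d. (\<forall>k. a$k \<le> b$k) \<and>
      B = {x. \<forall>k. a$k \<le> x$k \<and> x$k \<le> b$k})"

definition pierceable :: "nat \<Rightarrow> 'a set set \<Rightarrow> bool" where
  "pierceable t G \<longleftrightarrow> (\<exists>P. finite P \<and> card P \<le> t \<and> (\<forall>B\<in>G. B \<inter> P \<noteq> {}))"

end

theory Submission
  imports Defs
begin

text \<open>Two disjoint boxes are separated by a hyperplane orthogonal to some coordinate axis \<open>k\<close>.
  If two different families were both split along the same axis, a box of each family lying
  below would have to meet the box of the other family lying above, forcing both orders of the
  \<open>k\<close>-th coordinate at once. Hence each of the \<open>d\<close> axes splits at most one family, so for
  \<open>n > d\<close> some family \<open>F i\<close> is pairwise intersecting. By the one-dimensional Helly property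
  of boxes, \<open>F i\<close> is pierced by one point, and so is any choice of one box from each other
  family, since those boxes meet pairwise.\<close>

lemma is_boxE:
  assumes "is_box B"
  obtains a b :: "real^'d" where "\<And>k. a$k \<le> b$k" and "B = {x. \<forall>k. a$k \<le> x$k \<and> x$k \<le> b$k}"
  using assms unfolding is_box_def by blast

abbreviation intersecting :: "'a set set \<Rightarrow> bool" where
  "intersecting G \<equiv> pairwise (\<lambda>A B. A \<inter> B \<noteq> {}) G"

lemma box_helly:
  fixes H :: "(real^'d) set set"
  assumes boxes: "\<forall>B\<in>H. is_box B" and "intersecting H"
  shows "\<Inter>H \<noteq> {}"
proof (cases "H = {}")
  case False
  from boxes have "\<forall>B\<in>H. \<exists>lo hi.
      (\<forall>k. lo $ k \<le> hi $ k) \<and> B = {x. \<forall>k. lo $ k \<le> x$k \<and> x$k \<le> hi $ k}"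
    unfolding is_box_def .
  then obtain lo hi where corners: "\<forall>B\<in>H.
      (\<forall>k. lo B $ k \<le> hi B $ k) \<and> B = {x. \<forall>k. lo B $ k \<le> x$k \<and> x$k \<le> hi B $ k}"
    unfolding bchoice_iff by blast
  have mem: "x \<in> B \<longleftrightarrow> (\<forall>k. lo B $ k \<le> x$k \<and> x$k \<le> hi B $ k)" if "B \<in> H" for B x
    using corners that by blast
  have lo_le_hi: "lo B $ k \<le> hi B' $ k" if "B \<in> H" "B' \<in> H" for B B' k
  proof (cases "B = B'")
    case True
    then show ?thesis using corners that by blast
  next
    case False
    with \<open>intersecting H\<close> that have "B \<inter> B' \<noteq> {}"
      by (rule pairwiseD)
    then obtain x where "x \<in> B" "x \<in> B'" by blast
    then have "lo B $ k \<le> x$k" "x$k \<le> hi B' $ k"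
      using mem that by blast+
    then show ?thesis by (rule order_trans)
  qed
  define p where "p = (\<chi> k. Sup ((\<lambda>B. lo B $ k) ` H))"
  have "p \<in> B" if "B \<in> H" for B
  proof -
    have "lo B $ k \<le> p $ k \<and> p $ k \<le> hi B $ k" for k
    proof
      have "bdd_above ((\<lambda>B. lo B $ k) ` H)"
        using lo_le_hi[OF _ that] by (auto simp: bdd_above_def)
      then show "lo B $ k \<le> p $ k"
        unfolding p_def using that by (simp add: cSup_upper)
      show "p $ k \<le> hi B $ k"
        unfolding p_def vec_lambda_beta using False lo_le_hi[OF _ that] by (rule cSUP_least)
    qed
    with mem[OF that] show ?thesis by blast
  qed
  then show ?thesis by blast
qed simp

definition below_along :: "'d \<Rightarrow> (real^'d) set \<Rightarrow> (real^'d) set \<Rightarrow> bool" where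
  "below_along k U V \<longleftrightarrow> (\<forall>x\<in>U. \<forall>y\<in>V. x$k < y$k)"

lemma disjoint_boxes_below_along:
  assumes "is_box B" "is_box B'" "B \<inter> B' = {}"
  shows "\<exists>k. below_along k B B' \<or> below_along k B' B"
proof -
  obtain a b where ab: "\<And>k. a$k \<le> b$k"
    and B: "B = {x. \<forall>k. a$k \<le> x$k \<and> x$k \<le> b$k}"
    using assms(1) by (blast elim: is_boxE)
  obtain a' b' where ab': "\<And>k. a'$k \<le> b'$k"
    and B': "B' = {x. \<forall>k. a'$k \<le> x$k \<and> x$k \<le> b'$k}"
    using assms(2) by (blast elim: is_boxE)
  have "\<exists>k. b$k < a'$k \<or> b'$k < a$k"
  proof (rule ccontr)
    assume "\<not> ?thesis"
    then have "(\<chi> k. max (a$k) (a'$k)) \<in> B \<inter> B'"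
      using ab ab' by (auto simp: B B' not_less)
    with assms(3) show False by blast
  qed
  then obtain k where "b$k < a'$k \<or> b'$k < a$k" by blast
  moreover have "a$k \<le> x$k" "x$k \<le> b$k" if "x \<in> B" for x
    using that by (simp_all add: B)
  moreover have "a'$k \<le> x$k" "x$k \<le> b'$k" if "x \<in> B'" for x
    using that by (simp_all add: B')
  ultimately have "below_along k B B' \<or> below_along k B' B"
    unfolding below_along_def by (meson order.strict_trans1 order.strict_trans2)
  then show ?thesis by blast
qed

lemma below_along_crossing:
  assumes "below_along k U V" "below_along k U' V'"
  shows "U \<inter> V' = {} \<or> U' \<inter> V = {}"
proof (rule ccontr)
  assume "\<not> ?thesis"
  then obtain x y where "x \<in> U" "x \<in> V'" "y \<in> U'" "y \<in> V" by blast
  with assms have "x$k < y$k" "y$k < x$k" unfolding below_along_def by blast+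
  then show False by simp
qed

lemma cross_intersecting_boxes_some_intersecting:
  fixes F :: "'i \<Rightarrow> (real^'d) set set"
  assumes "finite I" "card I > CARD('d)"
    and boxes: "\<And>i. i \<in> I \<Longrightarrow> \<forall>B\<in>F i. is_box B"
    and cross: "\<And>i j B B'. i \<in> I \<Longrightarrow> j \<in> I \<Longrightarrow> i \<noteq> j \<Longrightarrow>
      B \<in> F i \<Longrightarrow> B' \<in> F j \<Longrightarrow> B \<inter> B' \<noteq> {}"
  shows "\<exists>i\<in>I. intersecting (F i)"
proof (rule ccontr)
  assume none: "\<not> ?thesis"
  have "\<forall>i\<in>I. \<exists>k. \<exists>U\<in>F i. \<exists>V\<in>F i. below_along k U V"
  proof
    fix i assume "i \<in> I"
    with none have "\<not> intersecting (F i)" by blast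
    then obtain B B' where "B \<in> F i" "B' \<in> F i" "B \<inter> B' = {}"
      unfolding pairwise_def by blast
    moreover from this(1,2) have "is_box B" "is_box B'"
      using boxes[OF \<open>i \<in> I\<close>] by blast+
    ultimately show "\<exists>k. \<exists>U\<in>F i. \<exists>V\<in>F i. below_along k U V"
      using disjoint_boxes_below_along by blast
  qed
  then obtain axis where axis: "\<forall>i\<in>I. \<exists>U\<in>F i. \<exists>V\<in>F i. below_along (axis i) U V"
    unfolding bchoice_iff by blast
  have "inj_on axis I"
  proof (rule inj_onI, rule ccontr)
    fix i j assume "i \<in> I" "j \<in> I" "axis i = axis j" "i \<noteq> j"
    obtain U V where "U \<in> F i" "V \<in> F i" "below_along (axis i) U V"
      using axis \<open>i \<in> I\<close> by blast
    moreover obtain U' V' where "U' \<in> F j" "V' \<in> F j" "below_along (axis i) U' V'"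
      using axis \<open>j \<in> I\<close> \<open>axis i = axis j\<close> by auto
    ultimately have "U \<inter> V' = {} \<or> U' \<inter> V = {}" and "U \<inter> V' \<noteq> {}" and "U' \<inter> V \<noteq> {}"
      using below_along_crossing cross \<open>i \<in> I\<close> \<open>j \<in> I\<close> \<open>i \<noteq> j\<close> by blast+
    then show False by blast
  qed
  then have "card I \<le> CARD('d)"
    by (rule card_inj_on_le) auto
  with assms(2) show False by simp
qed

lemma pierceable_1I:
  assumes "\<Inter>G \<noteq> {}"
  shows "pierceable 1 G"
proof -
  from assms obtain p where "p \<in> \<Inter>G" by blast
  then show ?thesis
    unfolding pierceable_def by (intro exI[of _ "{p}"]) auto
qed

lemma pierceable_Un: "pierceable s G \<Longrightarrow> pierceable t H \<Longrightarrow> pierceable (s + t) (G \<union> H)"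
  unfolding pierceable_def
proof (elim exE conjE)
  fix P Q
  assume "finite P" "card P \<le> s" "\<forall>B\<in>G. B \<inter> P \<noteq> {}"
    and "finite Q" "card Q \<le> t" "\<forall>B\<in>H. B \<inter> Q \<noteq> {}"
  moreover have "card (P \<union> Q) \<le> card P + card Q" by (rule card_Un_le)
  ultimately show "\<exists>R. finite R \<and> card R \<le> s + t \<and> (\<forall>B\<in>G \<union> H. B \<inter> R \<noteq> {})"
    by (intro exI[of _ "P \<union> Q"]) auto
qed

theorem lemma1:
  fixes F :: "nat \<Rightarrow> (real^'d) set set" and n :: nat
  assumes "n > CARD('d) + 1"
    and "\<And>i. i \<in> {1..n} \<Longrightarrow> F i \<noteq> {}"
    and "\<And>i. i \<in> {1..n} \<Longrightarrow> \<forall>B\<in>F i. is_box B"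
    and "\<And>i j B B'. i \<in> {1..n} \<Longrightarrow> j \<in> {1..n} \<Longrightarrow> i \<noteq> j \<Longrightarrow>
           B \<in> F i \<Longrightarrow> B' \<in> F j \<Longrightarrow> B \<inter> B' \<noteq> {}"
  shows "\<exists>i\<in>{1..n}. \<exists>Bs :: nat \<Rightarrow> (real^'d) set.
           (\<forall>j\<in>{1..n} - {i}. Bs j \<in> F j) \<and>
           pierceable 2 (F i \<union> Bs ` ({1..n} - {i}))"
proof -
  obtain i where i: "i \<in> {1..n}" "intersecting (F i)"
    using cross_intersecting_boxes_some_intersecting[of "{1..n}" F] assms(1,3,4) by auto
  define Bs where "Bs j = (SOME B. B \<in> F j)" for j
  have Bs: "\<forall>j\<in>{1..n} - {i}. Bs j \<in> F j"
    unfolding Bs_def using assms(2) by (simp add: some_in_eq)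
  have "pierceable 1 (F i)"
    using i assms(3) by (intro pierceable_1I box_helly) auto
  moreover have "pierceable 1 (Bs ` ({1..n} - {i}))"
  proof (intro pierceable_1I box_helly)
    show "\<forall>B\<in>Bs ` ({1..n} - {i}). is_box B"
      using Bs assms(3) by blast
    show "intersecting (Bs ` ({1..n} - {i}))"
      using Bs assms(4) unfolding pairwise_def by fastforce
  qed
  ultimately have "pierceable 2 (F i \<union> Bs ` ({1..n} - {i}))"
    using pierceable_Un one_add_one by metis
  with i(1) Bs show ?thesis by blast
qed

end
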